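(* Let $N\in\mathbb N$ and let $a=(a_0,a_1,\dots,a_N)\in\mathbb N^{N+1}$ satisfy $a_0\le a_1\le\dots\le a_N$, $a_0<a_2<a_4<\cdots$, $a_1<a_3<a_5<\cdots$, and suppose the set $\mathcal J=\{i\in[0,N]: a_i$ appears exactly once in the sequence $a\}$ is nonempty. Then $\mathcal J=\{i_0<i_1<\dots<i_\mu\}$ with $\mu\in\mathbb N$, $\mu\equiv N\pmod2$, $i_s\equiv s\pmod 2$, and $i_{s+1}=i_s+2m_s+1$ with $m_s\in\mathbb N$ for $s\in[0,\mu-1]$. Let $\mathcal E$ be the set of $b=(b_0,\dots,b_N)\in\mathbb N^{N+1}$ with $b_0<b_2<b_4<\cdots$, $b_1<b_3<b_5<\cdots$ and such that the multisets $\{b_0,\dots,b_N\}$ and $\{a_0,\dots,a_N\}$ coincide. For $b\in\mathcal E$ let $\mathring b=(b_0,b_1,b_2+1,b_3+1,b_4+2,b_5+2,\dots)$, i.e. $\mathring b_i=b_i+\lfloor i/2\rfloor$. For $X\subset[0,\mu-1]\cap2\mathbb N$ define $a^X\in\mathcal E$ by: for $s\in X$, $(a^X_{i_s},a^X_{i_s+1},a^X_{i_s+2},a^X_{i_s+3},\dots,a^X_{i_s+2m_s},a^X_{i_s+2m_s+1})=(a_{i_s+1},a_{i_s},a_{i_s+3},a_{i_s+2},\dots,a_{i_s+2m_s+1},a_{i_s+2m_s})$, and $a^X_i=a_i$ for all other $i\in[0,N]$. If $b\in\mathcal E$ is such that the multiset $\{\mathring b_0,\dots,\mathring b_N\}$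 equals the multiset $\{\mathring a_0,\dots,\mathring a_N\}$, then there exists $X\subset[0,\mu-1]\cap2\mathbb N$ with $b=a^X$. *)

theory Defs
  imports Main "HOL-Library.Multiset"
begin

text \<open>Sequences a = (a_0,...,a_N) are modelled as functions nat => nat; only
  the values at indices 0..N matter.\<close>

definition singles :: "nat \<Rightarrow> (nat \<Rightarrow> nat) \<Rightarrow> nat set" where
  "singles N a = {i. i \<le> N \<and> card {j. j \<le> N \<and> a j = a i} = 1}"

definition idx :: "nat \<Rightarrow> (nat \<Rightarrow> nat) \<Rightarrow> nat \<Rightarrow> nat" where
  "idx N a s = sorted_list_of_set (singles N a) ! s"

definition mu :: "nat \<Rightarrow> (nat \<Rightarrow> nat) \<Rightarrow> nat" where
  "mu N a = card (singles N a) - 1"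

definition strict2 :: "nat \<Rightarrow> (nat \<Rightarrow> nat) \<Rightarrow> bool" where
  "strict2 N b = (\<forall>i. i + 2 \<le> N \<longrightarrow> b i < b (i + 2))"

definition mset_seq :: "nat \<Rightarrow> (nat \<Rightarrow> nat) \<Rightarrow> nat multiset" where
  "mset_seq N b = mset (map b [0..<Suc N])"

definition inE :: "nat \<Rightarrow> (nat \<Rightarrow> nat) \<Rightarrow> (nat \<Rightarrow> nat) \<Rightarrow> bool" where
  "inE N a b = (strict2 N b \<and> mset_seq N b = mset_seq N a)"

definition ring :: "(nat \<Rightarrow> nat) \<Rightarrow> nat \<Rightarrow> nat" where
  "ring b i = b i + i div 2"

text \<open>a^X: inside each block [i_s, i_s + 2 m_s + 1] = [i_s, i_(s+1)] with s in X,
  consecutive pairs (i_s+2k, i_s+2k+1) are swapped; elsewhere a^X_i = a_i.\<close>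
definition aX :: "nat \<Rightarrow> (nat \<Rightarrow> nat) \<Rightarrow> nat set \<Rightarrow> nat \<Rightarrow> nat" where
  "aX N a X i =
    (if \<exists>s\<in>X. idx N a s \<le> i \<and> i \<le> idx N a (Suc s) \<and> even (i - idx N a s) then a (Suc i)
     else if \<exists>s\<in>X. idx N a s \<le> i \<and> i \<le> idx N a (Suc s) \<and> odd (i - idx N a s) then a (i - 1)
     else a i)"

end

theory Submission
  imports Defs
begin

text \<open>Since a is nondecreasing and a_i < a_(i+2), a value that occurs twice occupies two
  adjacent positions; pairing these up shows that i_s and s have the same parity, and so do
  mu and N.  For even s the block [i_s, i_(s+1)] splits into the pairs (2k, 2k+1), and a^X is
  a composed with the involution swapping the pairs of the chosen blocks; it stays strictly
  increasing along each parity class because blocks are bordered by singles.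

  Conversely, let b be in E with the same ring-multiset as a.  Peeling off positions from the
  left, the minimum a_(2k) of the tail must sit at 2k or 2k+1 in b, and then the ring value
  a_(2k+1) + k forces the other slot, so b keeps or swaps every pair.  A value shared by two
  consecutive pairs forces them to be swapped together, a swapped run cannot reach past N, and
  it can only start and end at singles: the swapped pairs form whole blocks.\<close>

lemma sorted_wrt_less_nth_less_iff:
  fixes xs :: "'a::linorder list"
  assumes "sorted_wrt (<) xs" "s < length xs" "t < length xs"
  shows "xs ! s < xs ! t \<longleftrightarrow> s < t"
  using assms sorted_wrt_nth_less[OF assms(1)]
  by (cases s t rule: linorder_cases) (auto dest: order.asym)

lemma sorted_wrt_less_nth_next:
  fixes xs :: "'a::linorder list"
  assumes "sorted_wrt (<) xs" "x \<in> set xs" "s < length xs" "xs ! s < x"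
  shows "Suc s < length xs \<and> xs ! Suc s \<le> x"
proof -
  obtain t where t: "t < length xs" "xs ! t = x" using assms(2) by (auto simp: in_set_conv_nth)
  then have "Suc s \<le> t" using assms sorted_wrt_less_nth_less_iff[OF assms(1)] by (metis Suc_leI)
  then show ?thesis
    using t assms(1) sorted_wrt_less_nth_less_iff[OF assms(1)] by (metis le_less le_less_trans)
qed

lemma sorted_wrt_less_card_below:
  fixes xs :: "'a::linorder list"
  assumes "sorted_wrt (<) xs" "s < length xs"
  shows "card {x \<in> set xs. x < xs ! s} = s"
proof -
  have "{x \<in> set xs. x < xs ! s} = (!) xs ` {0..<s}"
    using assms sorted_wrt_less_nth_less_iff[OF assms(1)]
    by (auto simp: in_set_conv_nth) (metis order.strict_trans)
  also have "\<dots> = set (take s xs)" using assms(2) by (simp add: nth_image)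
  finally show ?thesis
    using assms strict_sorted_iff by (metis distinct_card distinct_take length_take min.absorb4)
qed

lemma card_eq_1_iff_singleton: "x \<in> A \<Longrightarrow> card A = 1 \<longleftrightarrow> A = {x}"
  by (auto simp: card_1_singleton_iff)

lemma mono_upto:
  fixes a :: "nat \<Rightarrow> 'a::order"
  shows "\<forall>i < N. a i \<le> a (Suc i) \<Longrightarrow> i \<le> j \<Longrightarrow> j \<le> N \<Longrightarrow> a i \<le> a j"
proof (induction j)
  case (Suc j)
  then show ?case by (metis Suc_leD Suc_le_lessD le_Suc_eq order.trans order.refl)
qed simp

locale mono_strict2 =
  fixes N :: nat and a :: "nat \<Rightarrow> nat"
  assumes mono: "\<forall>i < N. a i \<le> a (Suc i)"
    and strict: "strict2 N a"
begin

lemma strict_upto: "i + 2 \<le> j \<Longrightarrow> j \<le> N \<Longrightarrow> a i < a j"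
proof -
  assume ij: "i + 2 \<le> j" "j \<le> N"
  have "a i < a (i + 2)" using strict ij unfolding strict2_def by simp
  also have "\<dots> \<le> a j" using mono_upto[OF mono] ij by simp
  finally show ?thesis .
qed

lemma singles_iff: "i \<in> singles N a \<longleftrightarrow> i \<le> N \<and> (\<forall>j \<le> N. a j = a i \<longrightarrow> j = i)"
proof (cases "i \<le> N")
  case True
  then have "card {j. j \<le> N \<and> a j = a i} = 1 \<longleftrightarrow> {j. j \<le> N \<and> a j = a i} = {i}"
    by (intro card_eq_1_iff_singleton) simp
  also have "\<dots> \<longleftrightarrow> (\<forall>j \<le> N. a j = a i \<longrightarrow> j = i)" using True by blast
  finally show ?thesis using True by (simp add: singles_def)
qed (simp add: singles_def)

lemma singles_iff_neighbours:
  "i \<in> singles N a \<longleftrightarrow> i \<le> N \<and> (0 < i \<longrightarrow> a (i - 1) < a i) \<and> (i < N \<longrightarrow> a i < a (Suc i))"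
proof (cases "i \<le> N")
  case True
  have "(\<forall>j \<le> N. a j = a i \<longrightarrow> j = i) \<longleftrightarrow>
      (0 < i \<longrightarrow> a (i - 1) \<noteq> a i) \<and> (i < N \<longrightarrow> a i \<noteq> a (Suc i))"
  proof
    assume "\<forall>j \<le> N. a j = a i \<longrightarrow> j = i"
    then show "(0 < i \<longrightarrow> a (i - 1) \<noteq> a i) \<and> (i < N \<longrightarrow> a i \<noteq> a (Suc i))"
      using True by (auto dest: spec[of _ "i - 1"] spec[of _ "Suc i"])
  next
    assume neighbours: "(0 < i \<longrightarrow> a (i - 1) \<noteq> a i) \<and> (i < N \<longrightarrow> a i \<noteq> a (Suc i))"
    show "\<forall>j \<le> N. a j = a i \<longrightarrow> j = i"
    proof (intro allI impI)
      fix j assume j: "j \<le> N" "a j = a i"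
      show "j = i"
      proof (rule ccontr)
        assume "j \<noteq> i"
        then consider "j = i - 1" "0 < i" | "j = Suc i" | "j + 2 \<le> i \<or> i + 2 \<le> j" by linarith
        then show False using j True neighbours strict_upto by cases fastforce+
      qed
    qed
  qed
  moreover have "(0 < i \<longrightarrow> a (i - 1) \<noteq> a i) \<longleftrightarrow> (0 < i \<longrightarrow> a (i - 1) < a i)"
    using mono_upto[OF mono, of "i - 1" i] True by auto
  moreover have "(i < N \<longrightarrow> a i \<noteq> a (Suc i)) \<longleftrightarrow> (i < N \<longrightarrow> a i < a (Suc i))"
    using mono by auto
  ultimately show ?thesis using True by (simp only: singles_iff simp_thms)
qed (simp add: singles_iff)

lemma nonsingle_neighbour:
  "i \<le> N \<Longrightarrow> i \<notin> singles N a \<Longrightarrow> (0 < i \<and> a (i - 1) = a i) \<or> (i < N \<and> a i = a (Suc i))"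
proof -
  assume "i \<le> N" "i \<notin> singles N a"
  then have "\<not> ((0 < i \<longrightarrow> a (i - 1) < a i) \<and> (i < N \<longrightarrow> a i < a (Suc i)))"
    using singles_iff_neighbours by blast
  moreover have "0 < i \<Longrightarrow> a (i - 1) \<le> a i" "i < N \<Longrightarrow> a i \<le> a (Suc i)"
    using mono mono_upto[OF mono, of "i - 1" i] \<open>i \<le> N\<close> by auto
  ultimately show ?thesis by (meson antisym not_less)
qed

text \<open>Values occurring twice occupy two adjacent positions, so the non-singles before a
  strict ascent pair up.\<close>
lemma card_singles_below_mod2:
  assumes "i \<le> Suc N" "i = 0 \<or> i = Suc N \<or> a (i - 1) < a i"
  shows "card {x \<in> singles N a. x < i} mod 2 = i mod 2"
proof -
  have "even (card {j. j < i \<and> j \<notin> singles N a})"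
    using assms
  proof (induction i rule: less_induct)
    case (less i)
    show ?case
    proof (cases i)
      case (Suc k)
      show ?thesis
      proof (cases "k \<in> singles N a")
        case True
        then have "{j. j < i \<and> j \<notin> singles N a} = {j. j < k \<and> j \<notin> singles N a}"
          using Suc by (auto simp: less_Suc_eq)
        moreover have "k = 0 \<or> a (k - 1) < a k" using True singles_iff_neighbours by blast
        ultimately show ?thesis using less Suc by simp
      next
        case False
        have "k \<le> N" using less Suc by simp
        moreover have "k < N \<longrightarrow> a k < a (Suc k)" using less.prems Suc by auto
        ultimately obtain l where l: "k = Suc l" "a l = a k"
          using nonsingle_neighbour[OF _ False] by (cases k) auto
        have "l \<notin> singles N a" using l \<open>k \<le> N\<close> singles_iff_neighbours[of l] by auto
        then have "{j. j < i \<and> j \<notin> singles N a} = insert k (insert l {j. j < l \<and> j \<notin> singles N a})"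
          using False Suc l by (auto simp: less_Suc_eq)
        moreover have "l = 0 \<or> a (l - 1) < a l"
          using l strict_upto[of "l - 1" k] \<open>k \<le> N\<close> by (cases l) auto
        ultimately show ?thesis using less Suc l by simp
      qed
    qed simp
  qed
  moreover have "card {x \<in> singles N a. x < i} + card {j. j < i \<and> j \<notin> singles N a} = i"
  proof -
    have "card {x \<in> singles N a. x < i} + card {j. j < i \<and> j \<notin> singles N a}
        = card ({x \<in> singles N a. x < i} \<union> {j. j < i \<and> j \<notin> singles N a})"
      by (rule card_Un_disjoint[symmetric]) auto
    also have "{x \<in> singles N a. x < i} \<union> {j. j < i \<and> j \<notin> singles N a} = {..<i}" by auto
    finally show ?thesis by simp
  qed
  moreover have "\<And>x y i :: nat. even y \<Longrightarrow> x + y = i \<Longrightarrow> x mod 2 = i mod 2" by presburger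
  ultimately show ?thesis by blast
qed

lemma card_singles_mod2: "card (singles N a) mod 2 = Suc N mod 2"
proof -
  have "{x \<in> singles N a. x < Suc N} = singles N a" by (auto simp: singles_def)
  then show ?thesis using card_singles_below_mod2[of "Suc N"] by simp
qed

end

locale mono_strict2_singles = mono_strict2 +
  assumes singles_ne: "singles N a \<noteq> {}"
begin

lemma finite_singles: "finite (singles N a)"
  by (simp add: singles_def)

lemma length_sorted_singles: "length (sorted_list_of_set (singles N a)) = Suc (mu N a)"
  using finite_singles singles_ne by (simp add: mu_def card_gt_0_iff)

lemma idx_in_singles: "s \<le> mu N a \<Longrightarrow> idx N a s \<in> singles N a"
  using length_sorted_singles finite_singles unfolding idx_def
  by (metis le_imp_less_Suc nth_mem set_sorted_list_of_set)

lemma idx_le: "s \<le> mu N a \<Longrightarrow> idx N a s \<le> N"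
  using idx_in_singles by (simp add: singles_def)

lemma idx_less_iff: "s \<le> mu N a \<Longrightarrow> t \<le> mu N a \<Longrightarrow> idx N a s < idx N a t \<longleftrightarrow> s < t"
  unfolding idx_def using length_sorted_singles
  by (simp add: sorted_wrt_less_nth_less_iff[OF strict_sorted_list_of_set[of "singles N a"]])

lemma idx_surj: "x \<in> singles N a \<Longrightarrow> \<exists>s \<le> mu N a. idx N a s = x"
  using length_sorted_singles finite_singles unfolding idx_def
  by (metis in_set_conv_nth less_Suc_eq_le set_sorted_list_of_set)

lemma idx_next:
  "x \<in> singles N a \<Longrightarrow> s \<le> mu N a \<Longrightarrow> idx N a s < x \<Longrightarrow> s < mu N a \<and> idx N a (Suc s) \<le> x"
  using sorted_wrt_less_nth_next[OF strict_sorted_list_of_set[of "singles N a"], of x s]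
    length_sorted_singles finite_singles
  unfolding idx_def by simp

lemma idx_mod2: "s \<le> mu N a \<Longrightarrow> idx N a s mod 2 = s mod 2"
proof -
  assume s: "s \<le> mu N a"
  have "card {x \<in> singles N a. x < idx N a s} = s"
    using sorted_wrt_less_card_below[OF strict_sorted_list_of_set[of "singles N a"], of s]
      length_sorted_singles finite_singles s
    unfolding idx_def by simp
  moreover have "idx N a s = 0 \<or> a (idx N a s - 1) < a (idx N a s)" "idx N a s \<le> Suc N"
    using idx_in_singles[OF s] singles_iff_neighbours by auto
  ultimately show ?thesis using card_singles_below_mod2 by metis
qed

lemma mu_mod2: "mu N a mod 2 = N mod 2"
  using card_singles_mod2 length_sorted_singles by (simp add: mod_Suc split: if_splits)

lemma idx_Suc_odd_gap: "s < mu N a \<Longrightarrow> \<exists>m. idx N a (Suc s) = idx N a s + 2 * m + 1"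
proof -
  assume s: "s < mu N a"
  then have "idx N a s < idx N a (Suc s)" using idx_less_iff by simp
  moreover have "idx N a s mod 2 = s mod 2" "idx N a (Suc s) mod 2 = Suc s mod 2"
    using s idx_mod2 by simp_all
  moreover have "\<And>x y s :: nat. x < y \<Longrightarrow> x mod 2 = s mod 2 \<Longrightarrow> y mod 2 = Suc s mod 2
      \<Longrightarrow> \<exists>m. y = x + 2 * m + 1"
    by presburger
  ultimately show ?thesis by blast
qed

end

lemma mset_seq_eq_image_mset: "mset_seq N f = image_mset f (mset_set {..N})"
  unfolding mset_seq_def by (simp only: mset_map mset_upt atLeast0LessThan lessThan_Suc_atMost)

definition swap_index :: "nat set \<Rightarrow> nat \<Rightarrow> nat" where
  "swap_index P i = (if i div 2 \<in> P then (if even i then Suc i else i - 1) else i)"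

lemma swap_index_even [simp]: "swap_index P (2 * k) = (if k \<in> P then 2 * k + 1 else 2 * k)"
  unfolding swap_index_def by simp

lemma swap_index_odd [simp]: "swap_index P (Suc (2 * k)) = (if k \<in> P then 2 * k else Suc (2 * k))"
  unfolding swap_index_def by simp

lemma swap_index_swap_index [simp]: "swap_index P (swap_index P i) = i"
  unfolding swap_index_def by (auto elim!: oddE)

lemma swap_index_le: "\<forall>k\<in>P. 2 * k + 1 \<le> N \<Longrightarrow> i \<le> N \<Longrightarrow> swap_index P i \<le> N"
  unfolding swap_index_def by (auto elim!: evenE oddE)

lemma mset_seq_comp_swap_index:
  assumes "\<forall>k\<in>P. 2 * k + 1 \<le> N"
  shows "mset_seq N (f \<circ> swap_index P) = mset_seq N f"
proof -
  have "inj (swap_index P)" by (metis injI swap_index_swap_index)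
  moreover have "swap_index P ` {..N} = {..N}"
    using swap_index_le[OF assms] by (auto intro: image_eqI[of _ _ "swap_index P _"])
  ultimately have "image_mset (swap_index P) (mset_set {..N}) = mset_set {..N}"
    by (metis image_mset_mset_set inj_on_subset subset_UNIV)
  then show ?thesis unfolding mset_seq_eq_image_mset by (simp flip: image_mset.comp)
qed

context mono_strict2
begin

lemma strict2_comp_swap_index:
  assumes P_le: "\<forall>k\<in>P. 2 * k + 1 \<le> N"
    and P_ascent: "\<And>k. 2 * k + 2 \<le> N \<Longrightarrow> (k \<in> P) \<noteq> (Suc k \<in> P) \<Longrightarrow> a (2 * k + 1) < a (2 * k + 2)"
  shows "strict2 N (a \<circ> swap_index P)"
  unfolding strict2_def
proof (intro allI impI)
  fix i assume i: "i + 2 \<le> N"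
  define k where "k = i div 2"
  have "(i + 2) div 2 = Suc k" unfolding k_def by simp
  then have "swap_index P i + 2 \<le> swap_index P (i + 2)
      \<or> (swap_index P i = 2 * k + 1 \<and> swap_index P (i + 2) = 2 * k + 2 \<and> (k \<in> P) \<noteq> (Suc k \<in> P))"
    unfolding swap_index_def k_def by (auto elim!: evenE oddE)
  moreover have "swap_index P (i + 2) \<le> N" using swap_index_le[OF P_le i] .
  ultimately show "(a \<circ> swap_index P) i < (a \<circ> swap_index P) (i + 2)"
    using strict_upto P_ascent by auto
qed

end

definition swap_blocks :: "nat \<Rightarrow> (nat \<Rightarrow> nat) \<Rightarrow> nat set \<Rightarrow> nat set" where
  "swap_blocks N a X = {k. \<exists>s\<in>X. idx N a s \<le> 2 * k \<and> 2 * k + 1 \<le> idx N a (Suc s)}"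

context mono_strict2_singles
begin

lemma idx_parity_even_block:
  assumes "s < mu N a" "even s"
  shows "even (idx N a s)" "odd (idx N a (Suc s))"
  using assms idx_mod2[of s] idx_mod2[of "Suc s"] by (auto simp: even_iff_mod_2_eq_zero mod_Suc)

lemma aX_eq_swap_index:
  assumes X: "X \<subseteq> {s. s < mu N a \<and> even s}"
  shows "aX N a X = a \<circ> swap_index (swap_blocks N a X)"
proof
  fix i
  have in_block: "(idx N a s \<le> i \<and> i \<le> idx N a (Suc s))
      \<longleftrightarrow> (idx N a s \<le> 2 * (i div 2) \<and> 2 * (i div 2) + 1 \<le> idx N a (Suc s))"
    and parity: "idx N a s \<le> i \<Longrightarrow> even (i - idx N a s) \<longleftrightarrow> even i" if "s \<in> X" for s
  proof -
    have "\<And>p q i :: nat. even p \<Longrightarrow> odd q \<Longrightarrow>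
        (p \<le> i \<and> i \<le> q \<longleftrightarrow> p \<le> 2 * (i div 2) \<and> 2 * (i div 2) + 1 \<le> q)
        \<and> (p \<le> i \<longrightarrow> even (i - p) \<longleftrightarrow> even i)"
      by presburger
    moreover have "even (idx N a s)" "odd (idx N a (Suc s))"
      using idx_parity_even_block X that by auto
    ultimately show "(idx N a s \<le> i \<and> i \<le> idx N a (Suc s))
      \<longleftrightarrow> (idx N a s \<le> 2 * (i div 2) \<and> 2 * (i div 2) + 1 \<le> idx N a (Suc s))"
      "idx N a s \<le> i \<Longrightarrow> even (i - idx N a s) \<longleftrightarrow> even i"
      by blast+
  qed
  have "(\<exists>s\<in>X. idx N a s \<le> i \<and> i \<le> idx N a (Suc s) \<and> even (i - idx N a s))
      \<longleftrightarrow> i div 2 \<in> swap_blocks N a X \<and> even i"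
    "(\<exists>s\<in>X. idx N a s \<le> i \<and> i \<le> idx N a (Suc s) \<and> odd (i - idx N a s))
      \<longleftrightarrow> i div 2 \<in> swap_blocks N a X \<and> odd i"
    unfolding swap_blocks_def using in_block parity by blast+
  then show "aX N a X i = (a \<circ> swap_index (swap_blocks N a X)) i"
    unfolding aX_def swap_index_def by auto
qed

lemma swap_blocks_le:
  assumes X: "X \<subseteq> {s. s < mu N a \<and> even s}"
  shows "\<forall>k\<in>swap_blocks N a X. 2 * k + 1 \<le> N"
proof
  fix k assume "k \<in> swap_blocks N a X"
  then obtain s where "s \<in> X" "2 * k + 1 \<le> idx N a (Suc s)" unfolding swap_blocks_def by blast
  moreover have "idx N a (Suc s) \<le> N" using idx_le X \<open>s \<in> X\<close> by (auto simp: Suc_le_eq)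
  ultimately show "2 * k + 1 \<le> N" by simp
qed

lemma swap_blocks_ascent:
  assumes X: "X \<subseteq> {s. s < mu N a \<and> even s}" and k: "2 * k + 2 \<le> N"
    and boundary: "(k \<in> swap_blocks N a X) \<noteq> (Suc k \<in> swap_blocks N a X)"
  shows "a (2 * k + 1) < a (2 * k + 2)"
proof -
  have "2 * k + 1 \<in> singles N a \<or> 2 * k + 2 \<in> singles N a"
  proof (cases "k \<in> swap_blocks N a X")
    case True
    then obtain s where s: "s \<in> X" "idx N a s \<le> 2 * k" "2 * k + 1 \<le> idx N a (Suc s)"
      unfolding swap_blocks_def by blast
    have "\<not> 2 * k + 3 \<le> idx N a (Suc s)"
      using True boundary s unfolding swap_blocks_def by auto
    moreover have "odd (idx N a (Suc s))" using idx_parity_even_block X s(1) by auto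
    moreover have "\<And>q :: nat. odd q \<Longrightarrow> 2 * k + 1 \<le> q \<Longrightarrow> \<not> 2 * k + 3 \<le> q \<Longrightarrow> q = 2 * k + 1"
      by presburger
    ultimately have "idx N a (Suc s) = 2 * k + 1" using s(3) by blast
    then show ?thesis using idx_in_singles X s(1) by (metis (mono_tags) Suc_leI mem_Collect_eq subsetD)
  next
    case False
    then have "Suc k \<in> swap_blocks N a X" using boundary by simp
    then obtain s where s: "s \<in> X" "idx N a s \<le> 2 * Suc k" "2 * Suc k + 1 \<le> idx N a (Suc s)"
      unfolding swap_blocks_def by blast
    have "\<not> idx N a s \<le> 2 * k"
      using False s unfolding swap_blocks_def by auto
    moreover have "even (idx N a s)" using idx_parity_even_block X s(1) by auto
    moreover have "\<And>p :: nat. even p \<Longrightarrow> p \<le> 2 * Suc k \<Longrightarrow> \<not> p \<le> 2 * k \<Longrightarrow> p = 2 * k + 2"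
      by presburger
    ultimately have "idx N a s = 2 * k + 2" using s(2) by blast
    then show ?thesis using idx_in_singles X s(1) by (metis (mono_tags) less_imp_le mem_Collect_eq subsetD)
  qed
  then show ?thesis using k singles_iff_neighbours by auto
qed

lemma aX_in_E: "X \<subseteq> {s. s < mu N a \<and> even s} \<Longrightarrow> inE N a (aX N a X)"
  unfolding inE_def aX_eq_swap_index
  using mset_seq_comp_swap_index strict2_comp_swap_index swap_blocks_le swap_blocks_ascent
  by simp

end

lemma image_mset_mset_set_remove:
  assumes "finite A" "finite B" "x \<in> A" "y \<in> B" "f x = g y"
    and "image_mset f (mset_set A) = image_mset g (mset_set B)"
  shows "image_mset f (mset_set (A - {x})) = image_mset g (mset_set (B - {y}))"
  using assms by (simp add: mset_set.remove[of A x] mset_set.remove[of B y])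

lemma pair_kept_or_swapped_step:
  fixes a b :: "nat \<Rightarrow> nat"
  assumes mono: "\<forall>i < N. a i \<le> a (Suc i)" and strict_b: "strict2 N b" and k: "2 * k + 1 \<le> N"
    and eq: "image_mset b (mset_set {2 * k..N}) = image_mset a (mset_set {2 * k..N})"
    and eq_ring: "image_mset (ring b) (mset_set {2 * k..N}) = image_mset (ring a) (mset_set {2 * k..N})"
  shows "(b (2 * k) = a (2 * k) \<and> b (2 * k + 1) = a (2 * k + 1)
        \<or> b (2 * k) = a (2 * k + 1) \<and> b (2 * k + 1) = a (2 * k))
    \<and> image_mset b (mset_set {2 * k + 2..N}) = image_mset a (mset_set {2 * k + 2..N})
    \<and> image_mset (ring b) (mset_set {2 * k + 2..N}) = image_mset (ring a) (mset_set {2 * k + 2..N})"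
proof -
  define A where "A = {2 * k..N}"
  have A: "finite A" "2 * k \<in> A" "2 * k + 1 \<in> A" using k by (auto simp: A_def)
  have lower_bound: "a m \<le> v" if "v \<in># image_mset a (mset_set {m..N})" for m v
    using that mono_upto[OF mono] by auto
  text \<open>The smallest value a(2k) can only sit at position 2k or 2k+1 of b, since b is
    strictly increasing along each parity class.\<close>
  have eqA: "image_mset b (mset_set A) = image_mset a (mset_set A)" using eq by (simp add: A_def)
  have "a (2 * k) \<in># image_mset b (mset_set A)" unfolding eqA using A by simp
  then obtain p where p: "p \<in> A" "b p = a (2 * k)" using A(1) by auto
  have p_pair: "p = 2 * k \<or> p = 2 * k + 1"
  proof (rule ccontr)
    assume "\<not> ?thesis"
    then have "2 * k + 2 \<le> p" "p \<le> N" using p by (auto simp: A_def)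
    then have "b (p - 2) < b p" using strict_b unfolding strict2_def
      by (metis add.commute le_add_diff_inverse2 add_leD2)
    moreover have "p - 2 \<in> A" using \<open>2 * k + 2 \<le> p\<close> \<open>p \<le> N\<close> by (auto simp: A_def)
    then have "b (p - 2) \<in># image_mset a (mset_set A)" unfolding eqA[symmetric] using A(1) by simp
    ultimately show False using p lower_bound unfolding A_def by fastforce
  qed
  define p' where "p' = (if p = 2 * k then 2 * k + 1 else 2 * k)"
  have A_rest: "A - {p} - {p'} = {2 * k + 2..N}" "A - {2 * k} - {2 * k + 1} = {2 * k + 2..N}"
    using p_pair by (auto simp: A_def p'_def)
  have p': "p' \<in> A - {p}" using A p_pair by (auto simp: p'_def)
  have eq1: "image_mset b (mset_set (A - {p})) = image_mset a (mset_set (A - {2 * k}))"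
    using image_mset_mset_set_remove[OF A(1) A(1) p(1) A(2) p(2) eqA] .
  have ring_p: "ring b p = ring a (2 * k)"
    using p p_pair by (auto simp: ring_def)
  have eq2: "image_mset (ring b) (mset_set (A - {p})) = image_mset (ring a) (mset_set (A - {2 * k}))"
    using image_mset_mset_set_remove[of A A p "2 * k" "ring b" "ring a"] A p ring_p eq_ring
    by (simp add: A_def)
  text \<open>Next, a(2k+1) + k is attained by ring b on A - {p}, which forces b p' = a(2k+1).\<close>
  have "ring a (2 * k + 1) \<in># image_mset (ring b) (mset_set (A - {p}))"
    unfolding eq2 using A by simp
  then have "ring a (2 * k + 1) \<in> ring b ` (A - {p})" using A(1) by simp
  then obtain q where q: "q \<in> A - {p}" "ring b q = ring a (2 * k + 1)" by (metis imageE)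
  have "q = p'"
  proof (rule ccontr)
    assume "q \<noteq> p'"
    then have "2 * k + 2 \<le> q" using q p_pair by (auto simp: A_def p'_def)
    then have "b q < a (2 * k + 1)" using q by (auto simp: ring_def)
    moreover have "b q \<in># image_mset a (mset_set (A - {2 * k}))"
      unfolding eq1[symmetric] using q A(1) by simp
    moreover have "A - {2 * k} = {2 * k + 1..N}" by (auto simp: A_def)
    ultimately show False using lower_bound by fastforce
  qed
  then have bp': "b p' = a (2 * k + 1)" using q by (simp add: ring_def p'_def split: if_splits)
  have "image_mset b (mset_set (A - {p} - {p'})) = image_mset a (mset_set (A - {2 * k} - {2 * k + 1}))"
    using image_mset_mset_set_remove[OF _ _ _ _ _ eq1] p' A bp' by simp
  moreover have "image_mset (ring b) (mset_set (A - {p} - {p'}))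
      = image_mset (ring a) (mset_set (A - {2 * k} - {2 * k + 1}))"
    using image_mset_mset_set_remove[OF _ _ _ _ _ eq2] p' A bp' p_pair by (simp add: ring_def p'_def)
  moreover have "b (2 * k) = a (2 * k) \<and> b (2 * k + 1) = a (2 * k + 1)
      \<or> b (2 * k) = a (2 * k + 1) \<and> b (2 * k + 1) = a (2 * k)"
    using p_pair p bp' by (auto simp: p'_def)
  ultimately show ?thesis using A_rest by simp
qed

lemma pair_kept_or_swapped:
  fixes a b :: "nat \<Rightarrow> nat"
  assumes mono: "\<forall>i < N. a i \<le> a (Suc i)" and strict_b: "strict2 N b"
    and eq: "mset_seq N b = mset_seq N a" and eq_ring: "mset_seq N (ring b) = mset_seq N (ring a)"
  shows "2 * k + 1 \<le> N \<Longrightarrow> b (2 * k) = a (2 * k) \<and> b (2 * k + 1) = a (2 * k + 1)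
        \<or> b (2 * k) = a (2 * k + 1) \<and> b (2 * k + 1) = a (2 * k)"
    and "even N \<Longrightarrow> b N = a N"
proof -
  have tails: "image_mset b (mset_set {2 * k..N}) = image_mset a (mset_set {2 * k..N})
      \<and> image_mset (ring b) (mset_set {2 * k..N}) = image_mset (ring a) (mset_set {2 * k..N})"
    if "2 * k \<le> Suc N" for k
    using that
  proof (induction k)
    case 0
    then show ?case using eq eq_ring by (simp add: mset_seq_eq_image_mset atLeast0AtMost)
  next
    case (Suc k)
    then show ?case
      using pair_kept_or_swapped_step[OF mono strict_b, of k] by simp
  qed
  show "2 * k + 1 \<le> N \<Longrightarrow> b (2 * k) = a (2 * k) \<and> b (2 * k + 1) = a (2 * k + 1)
        \<or> b (2 * k) = a (2 * k + 1) \<and> b (2 * k + 1) = a (2 * k)"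
    using pair_kept_or_swapped_step[OF mono strict_b] tails by simp
  show "even N \<Longrightarrow> b N = a N"
    using tails[of "N div 2"] by simp
qed

locale ring_equivalent = mono_strict2_singles +
  fixes b :: "nat \<Rightarrow> nat"
  assumes b_in_E: "inE N a b"
    and ring_eq: "mset_seq N (ring b) = mset_seq N (ring a)"
begin

definition swapped :: "nat set" where
  "swapped = {k. 2 * k + 1 \<le> N \<and> b (2 * k) \<noteq> a (2 * k)}"

lemma strict_b: "strict2 N b"
  using b_in_E by (simp add: inE_def)

lemma mset_eq: "mset_seq N b = mset_seq N a"
  using b_in_E by (simp add: inE_def)

lemma b_eq_swap_index: "i \<le> N \<Longrightarrow> b i = a (swap_index swapped i)"
proof -
  assume i: "i \<le> N"
  define k where "k = i div 2"
  have ik: "i = 2 * k \<or> i = Suc (2 * k)" unfolding k_def by presburger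
  show ?thesis
  proof (cases "2 * k + 1 \<le> N")
    case True
    then have "b (2 * k) = a (2 * k) \<and> b (2 * k + 1) = a (2 * k + 1)
        \<or> b (2 * k) = a (2 * k + 1) \<and> b (2 * k + 1) = a (2 * k)"
      using pair_kept_or_swapped(1)[OF mono strict_b mset_eq ring_eq] by blast
    with ik True show ?thesis by (elim disjE) (auto simp: swapped_def)
  next
    case False
    then have N: "N = 2 * k" and i_eq: "i = 2 * k" using i ik by auto
    have "k \<notin> swapped" using False by (simp add: swapped_def)
    moreover have "b (2 * k) = a (2 * k)"
      using pair_kept_or_swapped(2)[OF mono strict_b mset_eq ring_eq, unfolded N] by simp
    ultimately show ?thesis using i_eq by simp
  qed
qed

lemma swapped_le: "k \<in> swapped \<Longrightarrow> 2 * k + 1 \<le> N"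
  by (simp add: swapped_def)

lemma b_even: "2 * k + 1 \<le> N \<Longrightarrow> b (2 * k) = (if k \<in> swapped then a (2 * k + 1) else a (2 * k))"
  using b_eq_swap_index[of "2 * k"] by simp

lemma b_odd: "2 * k + 1 \<le> N \<Longrightarrow> b (2 * k + 1) = (if k \<in> swapped then a (2 * k) else a (2 * k + 1))"
  using b_eq_swap_index[of "Suc (2 * k)"] by simp

lemma b_last: "2 * k = N \<Longrightarrow> b (2 * k) = a (2 * k)"
  using pair_kept_or_swapped(2)[OF mono strict_b mset_eq ring_eq] by auto

lemma swapped_pair_distinct: "k \<in> swapped \<Longrightarrow> a (2 * k) \<noteq> a (2 * k + 1)"
  using b_even[of k] by (auto simp: swapped_def)

text \<open>A value shared by the pairs j and j+1 forces both pairs to be swapped or both kept,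
  because b increases strictly along each parity class.\<close>
lemma swapped_link:
  assumes j: "2 * j + 3 \<le> N" and shared: "a (2 * j + 1) = a (2 * j + 2)"
  shows "j \<in> swapped \<longleftrightarrow> Suc j \<in> swapped"
proof -
  have "b (2 * j) < b (2 * j + 2)" "b (2 * j + 1) < b (2 * j + 1 + 2)"
    using strict_b j unfolding strict2_def by auto
  moreover have "2 * j + 1 \<le> N" "2 * Suc j + 1 \<le> N" using j by auto
  ultimately show ?thesis
    using shared b_even[of j] b_odd[of j] b_even[of "Suc j"] b_odd[of "Suc j"]
    by (cases "j \<in> swapped"; cases "Suc j \<in> swapped") simp_all
qed

lemma not_swapped_last:
  assumes j: "2 * j + 2 = N" and shared: "a (2 * j + 1) = a (2 * j + 2)"
  shows "j \<notin> swapped"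
proof
  assume "j \<in> swapped"
  then have "b (2 * j) = a (2 * j + 1)" using b_even[of j] j by simp
  moreover have "b (2 * Suc j) = a (2 * Suc j)" using b_last[of "Suc j"] j by simp
  moreover have "b (2 * j) < b (2 * j + 2)"
    using strict_b[unfolded strict2_def, rule_format, of "2 * j"] j by simp
  ultimately show False using shared by simp
qed

lemma swapped_block_constant:
  assumes s: "s < mu N a" and p: "idx N a s = 2 * p"
  shows "2 * (p + d) + 1 \<le> idx N a (Suc s)
    \<Longrightarrow> a (2 * (p + d)) \<noteq> a (2 * (p + d) + 1) \<and> (p + d \<in> swapped \<longleftrightarrow> p \<in> swapped)"
proof (induction d)
  case 0
  have "idx N a (Suc s) \<le> N" using idx_le s by simp
  moreover have "2 * p \<in> singles N a" using idx_in_singles s p by (metis less_imp_le)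
  ultimately show ?case using 0 singles_iff_neighbours by fastforce
next
  case (Suc d)
  define j where "j = p + d"
  have IH: "a (2 * j) \<noteq> a (2 * j + 1)" "j \<in> swapped \<longleftrightarrow> p \<in> swapped"
    using Suc unfolding j_def by auto
  have j_inside: "2 * j + 3 \<le> idx N a (Suc s)" using Suc.prems unfolding j_def by simp
  have "idx N a (Suc s) \<le> N" using idx_le s by simp
  then have jN: "2 * j + 3 \<le> N" using j_inside by simp
  have "2 * j + 1 \<notin> singles N a"
    using idx_next[of "2 * j + 1" s] j_inside s p unfolding j_def by auto
  then have shared: "a (2 * j + 1) = a (2 * j + 2)"
    using nonsingle_neighbour[of "2 * j + 1"] IH(1) jN by auto
  have "a (2 * j + 1) < a (2 * j + 3)" using strict_upto jN by simp
  then have "a (2 * Suc j) \<noteq> a (2 * Suc j + 1)" using shared by (simp add: numeral_eq_Suc)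
  then show ?case using swapped_link[OF jN shared] IH(2) unfolding j_def by simp
qed

lemma swapped_block_start:
  "k \<in> swapped \<Longrightarrow>
    \<exists>j \<le> k. 2 * j \<in> singles N a \<and> j \<in> swapped \<and> (\<forall>x. 2 * j < x \<and> x \<le> 2 * k \<longrightarrow> x \<notin> singles N a)"
proof (induction k)
  case 0
  have "0 < N" using swapped_le[OF 0] by simp
  then have "a 0 \<le> a 1" using mono by simp
  moreover have "a 0 \<noteq> a 1" using swapped_pair_distinct[OF 0] by simp
  ultimately have "0 \<in> singles N a" using singles_iff_neighbours[of 0] by simp
  then show ?case using 0 by (intro exI[of _ 0]) auto
next
  case (Suc l)
  show ?case
  proof (cases "2 * Suc l \<in> singles N a")
    case True
    then show ?thesis using Suc.prems by (intro exI[of _ "Suc l"]) auto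
  next
    case False
    have lN: "2 * l + 3 \<le> N" using swapped_le[OF Suc.prems] by simp
    have "a (2 * Suc l) \<noteq> a (2 * Suc l + 1)" using swapped_pair_distinct[OF Suc.prems] .
    then have shared: "a (2 * l + 1) = a (2 * l + 2)"
      using nonsingle_neighbour[OF _ False] lN by auto
    then have "l \<in> swapped" using swapped_link[OF lN] Suc.prems by simp
    then obtain j where j: "j \<le> l" "2 * j \<in> singles N a" "j \<in> swapped"
      "\<forall>x. 2 * j < x \<and> x \<le> 2 * l \<longrightarrow> x \<notin> singles N a"
      using Suc.IH by blast
    have "2 * l + 1 \<notin> singles N a" using shared lN singles_iff_neighbours[of "2 * l + 1"] by auto
    have "x \<notin> singles N a" if "2 * j < x" "x \<le> 2 * Suc l" for x
    proof -
      have "x \<le> 2 * l \<or> x = 2 * l + 1 \<or> x = 2 * Suc l" using that(2) by presburger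
      then show ?thesis using j(4) that(1) False \<open>2 * l + 1 \<notin> singles N a\<close> by blast
    qed
    then show ?thesis using j by (intro exI[of _ j]) simp
  qed
qed

lemma swapped_block_end: "k \<in> swapped \<Longrightarrow> \<exists>q \<in> singles N a. 2 * k + 1 \<le> q"
proof (induction "N - 2 * k" arbitrary: k rule: less_induct)
  case less
  show ?case
  proof (cases "2 * k + 1 \<in> singles N a")
    case False
    have kN: "2 * k + 1 \<le> N" using swapped_le[OF less.prems] .
    then have shared: "2 * k + 1 < N" "a (2 * k + 1) = a (2 * k + 2)"
      using nonsingle_neighbour[OF kN False] swapped_pair_distinct[OF less.prems] by auto
    moreover have "2 * k + 2 \<noteq> N" using not_swapped_last shared(2) less.prems by blast
    ultimately have "2 * k + 3 \<le> N" by linarith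
    then have "Suc k \<in> swapped" using swapped_link shared(2) less.prems by blast
    moreover have "N - 2 * Suc k < N - 2 * k" using shared(1) by simp
    ultimately obtain q where "q \<in> singles N a" "2 * Suc k + 1 \<le> q"
      using less.hyps by blast
    then show ?thesis by (intro bexI[of _ q]) auto
  qed blast
qed

lemma swapped_eq_swap_blocks:
  "swapped = swap_blocks N a {s. s < mu N a \<and> even s \<and> idx N a s div 2 \<in> swapped}"
  (is "_ = swap_blocks N a ?X")
proof (intro set_eqI iffI)
  fix k assume k: "k \<in> swapped"
  obtain j where j: "j \<le> k" "2 * j \<in> singles N a" "j \<in> swapped"
    "\<forall>x. 2 * j < x \<and> x \<le> 2 * k \<longrightarrow> x \<notin> singles N a"
    using swapped_block_start[OF k] by blast
  obtain q where q: "q \<in> singles N a" "2 * k + 1 \<le> q" using swapped_block_end[OF k] by blast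
  obtain s where s: "s \<le> mu N a" "idx N a s = 2 * j" using idx_surj[OF j(2)] by blast
  have "s < mu N a" using idx_next[OF q(1) s(1)] s(2) q(2) j(1) by simp
  moreover have "2 * k + 1 \<le> idx N a (Suc s)"
  proof -
    have "idx N a (Suc s) \<in> singles N a" using idx_in_singles \<open>s < mu N a\<close> by simp
    moreover have "2 * j < idx N a (Suc s)" using idx_less_iff[of s "Suc s"] \<open>s < mu N a\<close> s(2) by simp
    ultimately show ?thesis using j(4) by force
  qed
  moreover have "even s" using idx_mod2[OF s(1)] s(2) by presburger
  ultimately show "k \<in> swap_blocks N a ?X" using s j unfolding swap_blocks_def by force
next
  fix k assume "k \<in> swap_blocks N a ?X"
  then obtain s where s: "s \<in> ?X" "idx N a s \<le> 2 * k" "2 * k + 1 \<le> idx N a (Suc s)"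
    unfolding swap_blocks_def by blast
  have "even (idx N a s)" using idx_parity_even_block s(1) by simp
  then obtain p where p: "idx N a s = 2 * p" by blast
  have "2 * (p + (k - p)) + 1 \<le> idx N a (Suc s)" using s(2,3) p by simp
  then have "p + (k - p) \<in> swapped \<longleftrightarrow> p \<in> swapped" using swapped_block_constant[of s p] s(1) p by blast
  moreover have "p \<in> swapped" using s(1) p by simp
  ultimately show "k \<in> swapped" using s(2) p by simp
qed

lemma b_eq_aX: "\<exists>X. X \<subseteq> {s. s < mu N a \<and> even s} \<and> (\<forall>i \<le> N. b i = aX N a X i)"
proof -
  let ?X = "{s. s < mu N a \<and> even s \<and> idx N a s div 2 \<in> swapped}"
  have "aX N a ?X = a \<circ> swap_index swapped"
    using aX_eq_swap_index[of ?X] swapped_eq_swap_blocks by auto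
  then show ?thesis using b_eq_swap_index by (intro exI[of _ ?X]) auto
qed

end

theorem lemma2p2:
  fixes N :: nat and a :: "nat \<Rightarrow> nat"
  assumes mono: "\<forall>i < N. a i \<le> a (Suc i)"
    and str: "strict2 N a"
    and ne: "singles N a \<noteq> {}"
  shows "mu N a mod 2 = N mod 2
    \<and> (\<forall>s \<le> mu N a. idx N a s mod 2 = s mod 2)
    \<and> (\<forall>s < mu N a. \<exists>m::nat. idx N a (Suc s) = idx N a s + 2 * m + 1)
    \<and> (\<forall>X. X \<subseteq> {s. s < mu N a \<and> even s} \<longrightarrow> inE N a (aX N a X))
    \<and> (\<forall>b. inE N a b \<and> mset_seq N (ring b) = mset_seq N (ring a) \<longrightarrow>
          (\<exists>X. X \<subseteq> {s. s < mu N a \<and> even s} \<and> (\<forall>i \<le> N. b i = aX N a X i)))"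
proof -
  interpret mono_strict2_singles N a
    using mono str ne by unfold_locales
  have "\<exists>X. X \<subseteq> {s. s < mu N a \<and> even s} \<and> (\<forall>i \<le> N. b i = aX N a X i)"
    if "inE N a b" "mset_seq N (ring b) = mset_seq N (ring a)" for b
  proof -
    interpret ring_equivalent N a b
      using mono str ne that by unfold_locales
    show ?thesis by (rule b_eq_aX)
  qed
  then show ?thesis using mu_mod2 idx_mod2 idx_Suc_odd_gap aX_in_E by blast
qed

end
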